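(* Let $\{a,b\}$ be a $2$-element generating set of a finite abelian group $G$, and assume $\mathrm{Cay}(G;a,b)$ has hamiltonian paths $P$ and $P'$ satisfying either of the following two (equivalent) conditions: (1) $|\delta_b(P)-\delta_a(P')|\le 1$; or (2) $\delta_b(P)+\delta_b(P')\in\{|G|,|G|-1,|G|-2\}$. Then $\mathrm{Cay}(G;a,b)$ has two arc-disjoint hamiltonian paths.
   Context: The Cayley digraph $\mathrm{Cay}(G;a,b)$ has vertex set $G$ and an arc from $v$ to $v+s$ for all $v\in G$, $s\in\{a,b\}$; an arc $(v,v+s)$ is called an $s$-edge. For a subdigraph $P$ and $s\in\{a,b\}$, $\delta_s(P)$ denotes the number of $s$-edges in $P$. A hamiltonian path is a directed path visiting every vertex exactly once; arc-disjoint means sharing no arc. *)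

theory Defs
  imports "HOL-Algebra.Algebra"
begin

definition cay_arc :: "('g, 'm) monoid_scheme \<Rightarrow> 'g \<Rightarrow> 'g \<Rightarrow> 'g \<times> 'g \<Rightarrow> bool" where
  "cay_arc G a b e \<longleftrightarrow> fst e \<in> carrier G \<and>
     (snd e = fst e \<otimes>\<^bsub>G\<^esub> a \<or> snd e = fst e \<otimes>\<^bsub>G\<^esub> b)"

definition path_arcs :: "'g list \<Rightarrow> ('g \<times> 'g) set" where
  "path_arcs vs = {(vs ! i, vs ! Suc i) | i. Suc i < length vs}"

definition is_ham_path :: "('g, 'm) monoid_scheme \<Rightarrow> 'g \<Rightarrow> 'g \<Rightarrow> 'g list \<Rightarrow> bool" where
  "is_ham_path G a b vs \<longleftrightarrow> distinct vs \<and> set vs = carrier G \<and>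
     (\<forall>e \<in> path_arcs vs. cay_arc G a b e)"

definition delta :: "('g, 'm) monoid_scheme \<Rightarrow> 'g \<Rightarrow> 'g list \<Rightarrow> nat" where
  "delta G s vs = card {e \<in> path_arcs vs. snd e = fst e \<otimes>\<^bsub>G\<^esub> s}"

end

theory Submission
  imports Defs
begin

(* Let c = a b^-1, m = ord c, and let r > 0 be least with a^r in <c>. Relative to a base vertex y,
   every element is uniquely y a^i c^p with i < r and p < m: it lies on level i (the coset
   y a^i <c>) at position p.
   Since (u c) b = u a, if a vertex u of a hamiltonian path leaves by a, then so does u c (else u a
   would have two in-arcs). Hence, if y is the terminal vertex, every level i <> 0 leaves entirely
   by a or entirely by b, and on level 0 exactly the positions 1, ..., j leave by b. So the path is
   determined by y, j and the set L of b-levels, delta_b = j + m |L|, and whether such a pattern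
   is hamiltonian depends only on j and |L|.
   Since delta_a(P') + delta_b(P') = |G| - 1, condition (1) implies (2). Under (2) the parameters of
   P' are complementary to those of P, and the pattern of P' can be realised so that every vertex
   leaves by the generator it does not use in P: based at y c^t with the b-levels complemented, or
   at y a^i with the levels rotated. This gives a hamiltonian path arc-disjoint from P. *)

lemma path_arcs_conv_image:
  "path_arcs vs = (\<lambda>i. (vs ! i, vs ! Suc i)) ` {..<length vs - 1}"
  unfolding path_arcs_def by auto

lemma card_path_arcs:
  assumes "distinct vs"
  shows "card (path_arcs vs) = length vs - 1"
proof -
  have "inj_on (\<lambda>i. (vs ! i, vs ! Suc i)) {..<length vs - 1}"
    by (rule inj_onI) (use nth_eq_iff_index_eq[OF assms] in auto)
  thus ?thesis unfolding path_arcs_conv_image by (simp add: card_image)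
qed

lemma path_arcs_out_unique:
  assumes "distinct vs" and "(u, v) \<in> path_arcs vs" and "(u, w) \<in> path_arcs vs"
  shows "v = w"
  using assms nth_eq_iff_index_eq[OF assms(1)] unfolding path_arcs_def by fastforce

lemma path_arcs_in_unique:
  assumes "distinct vs" and "(u, w) \<in> path_arcs vs" and "(v, w) \<in> path_arcs vs"
  shows "u = v"
  using assms nth_eq_iff_index_eq[OF assms(1)] unfolding path_arcs_def by fastforce

lemma path_arcs_from_last:
  assumes "distinct vs"
  shows "(last vs, v) \<notin> path_arcs vs"
proof
  assume "(last vs, v) \<in> path_arcs vs"
  then obtain i where i: "Suc i < length vs" and "vs ! i = last vs"
    unfolding path_arcs_def by auto
  hence "vs ! i = vs ! (length vs - 1)" by (subst (asm) last_conv_nth) auto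
  moreover have "length vs - 1 < length vs" using i by simp
  ultimately show False using i nth_eq_iff_index_eq[OF assms, of i "length vs - 1"] by simp
qed

lemma path_arcs_from_exists:
  assumes "u \<in> set vs" and "u \<noteq> last vs"
  shows "\<exists>v. (u, v) \<in> path_arcs vs"
proof -
  obtain i where "i < length vs" and "vs ! i = u" using assms(1) by (auto simp: in_set_conv_nth)
  moreover have "i \<noteq> length vs - 1"
  proof
    assume "i = length vs - 1"
    hence "u = last vs" using calculation last_conv_nth[of vs] by fastforce
    thus False using assms(2) by contradiction
  qed
  ultimately show ?thesis unfolding path_arcs_def by force
qed

lemma path_arcs_to_exists:
  assumes "v \<in> set vs" and "v \<noteq> hd vs"
  shows "\<exists>u. (u, v) \<in> path_arcs vs"
proof -
  obtain i where "i < length vs" and "vs ! i = v" using assms(1) by (auto simp: in_set_conv_nth)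
  moreover have "i \<noteq> 0"
  proof
    assume "i = 0"
    hence "v = hd vs" using calculation by (simp add: hd_conv_nth)
    thus False using assms(2) by contradiction
  qed
  ultimately have "Suc (i - 1) < length vs" and "v = vs ! Suc (i - 1)" by simp_all
  thus ?thesis unfolding path_arcs_def by blast
qed

lemma (in group) delta_add_delta:
  assumes "a \<in> carrier G" and "b \<in> carrier G" and "a \<noteq> b" and "is_ham_path G a b P"
  shows "delta G a P + delta G b P = card (carrier G) - 1"
proof -
  have "distinct P" and "set P = carrier G" and arcs: "\<forall>x \<in> path_arcs P. cay_arc G a b x"
    using assms(4) unfolding is_ham_path_def by auto
  hence card_arcs: "card (path_arcs P) = card (carrier G) - 1"
    using card_path_arcs distinct_card by metis
  let ?A = "{x \<in> path_arcs P. snd x = fst x \<otimes> a}" and ?B = "{x \<in> path_arcs P. snd x = fst x \<otimes> b}"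
  have union: "?A \<union> ?B = path_arcs P" using arcs unfolding cay_arc_def by auto
  have disjoint: "?A \<inter> ?B = {}"
  proof -
    have False if "x \<in> ?A" and "x \<in> ?B" for x
    proof -
      have "fst x \<in> carrier G" and "fst x \<otimes> a = fst x \<otimes> b"
        using that arcs unfolding cay_arc_def by auto
      thus False using assms(1-3) l_cancel by blast
    qed
    thus ?thesis by blast
  qed
  have "finite (path_arcs P)" unfolding path_arcs_conv_image by simp
  hence "card ?A + card ?B = card (?A \<union> ?B)"
    using disjoint by (intro card_Un_disjoint[symmetric]) auto
  thus ?thesis unfolding delta_def union card_arcs .
qed

lemma mod_add_right_cancel_less:
  fixes x x' k n :: nat
  assumes "x < n" and "x' < n" and "(x + k) mod n = (x' + k) mod n"
  shows "x = x'"
proof -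
  have "(int x + int k) mod int n = (int x' + int k) mod int n"
    using assms(3) by (metis of_nat_add of_nat_mod)
  hence "(int x + int k - int k) mod int n = (int x' + int k - int k) mod int n"
    by (metis mod_diff_left_eq)
  thus ?thesis using assms(1,2) by simp
qed

lemma mod_add_diff_self:
  fixes p t n :: nat
  assumes "p < n" and "t < n"
  shows "(p + (n - t)) mod n = (if t \<le> p then p - t else p + n - t)"
proof (cases "t \<le> p")
  case True
  have eq: "p + (n - t) = (p - t) + n" using True assms(2) by simp
  have "(p + (n - t)) mod n = p - t" unfolding eq using assms(1) by simp
  thus ?thesis using True by simp
qed (use assms in simp)

lemma funpow_full_orbit_returns:
  fixes f :: "nat \<Rightarrow> nat"
  assumes inj: "inj_on f {..<n}" and into: "\<And>p. p < n \<Longrightarrow> f p < n" and "0 < n"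
    and orbit: "inj_on (\<lambda>q. (f ^^ q) 0) {..<n}"
  shows "(f ^^ n) 0 = 0"
proof -
  have less: "(f ^^ q) 0 < n" for q by (induction q) (use into \<open>0 < n\<close> in auto)
  have "(\<lambda>q. (f ^^ q) 0) ` {..<n} = {..<n}"
    using orbit less by (intro card_subset_eq) (auto simp: card_image)
  hence "(f ^^ n) 0 \<in> (\<lambda>q. (f ^^ q) 0) ` {..<n}" using less[of n] by simp
  then obtain q where "q < n" and q: "(f ^^ n) 0 = (f ^^ q) 0" by auto
  show ?thesis
  proof (cases q)
    case 0
    thus ?thesis using q by simp
  next
    case (Suc q')
    have "f ((f ^^ (n - 1)) 0) = f ((f ^^ q') 0)"
      using q Suc \<open>0 < n\<close> by (metis Suc_pred' funpow.simps(2) comp_apply)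
    hence "(f ^^ (n - 1)) 0 = (f ^^ q') 0" using inj less by (simp add: inj_on_eq_iff)
    hence "n - 1 = q'" using orbit \<open>q < n\<close> Suc unfolding inj_on_def by auto
    thus ?thesis using \<open>q < n\<close> Suc by simp
  qed
qed

(* The position on level 1 reached from position p on level 0: a b-step lowers the position by
   one, as b = a c^(m-1); position 0 is the terminal vertex, which is followed by the start vtx y 1 j. *)
definition exit_pos :: "nat \<Rightarrow> nat \<Rightarrow> nat" where
  "exit_pos j p = (if p = 0 then j else if p \<le> j then p - 1 else p)"

lemma exit_pos_less: "j < n \<Longrightarrow> p < n \<Longrightarrow> exit_pos j p < n"
  unfolding exit_pos_def by auto

lemma inj_exit_pos: "inj (exit_pos j)"
  by (rule injI) (auto simp: exit_pos_def split: if_splits)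

definition num_b_levels :: "(nat \<Rightarrow> bool) \<Rightarrow> nat \<Rightarrow> nat" where
  "num_b_levels L n = card {l \<in> {1..<n}. L l}"

lemma num_b_levels_1 [simp]: "num_b_levels L (Suc 0) = 0"
  unfolding num_b_levels_def by simp

lemma num_b_levels_Suc:
  "1 \<le> i \<Longrightarrow> num_b_levels L (Suc i) = num_b_levels L i + (if L i then 1 else 0)"
proof -
  assume "1 \<le> i"
  hence "{l \<in> {1..<Suc i}. L l} = (if L i then insert i {l \<in> {1..<i}. L l} else {l \<in> {1..<i}. L l})"
    by (auto simp: less_Suc_eq)
  thus ?thesis unfolding num_b_levels_def by simp
qed

lemma num_b_levels_le: "num_b_levels L n \<le> n - 1"
proof -
  have "num_b_levels L n \<le> card {1..<n}" unfolding num_b_levels_def by (rule card_mono) auto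
  thus ?thesis by simp
qed

lemma num_b_levels_not: "num_b_levels (\<lambda>i. \<not> L i) n + num_b_levels L n = n - 1"
proof -
  have "card {l \<in> {1..<n}. \<not> L l} + card {l \<in> {1..<n}. L l}
      = card ({l \<in> {1..<n}. \<not> L l} \<union> {l \<in> {1..<n}. L l})"
    by (rule card_Un_disjoint[symmetric]) auto
  also have "{l \<in> {1..<n}. \<not> L l} \<union> {l \<in> {1..<n}. L l} = {1..<n}" by auto
  finally show ?thesis unfolding num_b_levels_def by simp
qed

lemma num_b_levels_rotate:
  assumes "i\<^sub>0 < n"
  shows "num_b_levels (\<lambda>i. M ((i + i\<^sub>0) mod n)) n = card {i \<in> {..<n}. i \<noteq> i\<^sub>0 \<and> M i}"
proof -
  define g where "g i = (i + i\<^sub>0) mod n" for i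
  have "bij_betw g {1..<n} ({..<n} - {i\<^sub>0})"
  proof (rule bij_betwI')
    fix i i' assume "i \<in> {1..<n}" and "i' \<in> {1..<n}"
    thus "(g i = g i') = (i = i')" unfolding g_def using mod_add_right_cancel_less by auto
  next
    fix i assume i: "i \<in> {1..<n}"
    have "g i \<noteq> g 0" using i mod_add_right_cancel_less[of i n 0 i\<^sub>0] unfolding g_def by auto
    thus "g i \<in> {..<n} - {i\<^sub>0}" using assms i unfolding g_def by simp
  next
    fix i assume i: "i \<in> {..<n} - {i\<^sub>0}"
    have "i + (n - i\<^sub>0) + i\<^sub>0 = i + n" using assms by simp
    hence "g ((i + (n - i\<^sub>0)) mod n) = i" unfolding g_def using i by (simp add: mod_add_left_eq)
    moreover have "(i + (n - i\<^sub>0)) mod n \<in> {1..<n}"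
      using i assms mod_add_diff_self[of i n i\<^sub>0] by auto
    ultimately show "\<exists>i'\<in>{1..<n}. i = g i'" by metis
  qed
  hence "bij_betw g {i \<in> {1..<n}. M (g i)} {i \<in> {..<n} - {i\<^sub>0}. M i}"
    by (rule bij_betw_Collect) simp
  moreover have "{i \<in> {..<n} - {i\<^sub>0}. M i} = {i \<in> {..<n}. i \<noteq> i\<^sub>0 \<and> M i}" by auto
  ultimately show ?thesis unfolding num_b_levels_def g_def by (simp add: bij_betw_same_card)
qed

lemma num_b_levels_opposite_rotated:
  assumes "1 \<le> i\<^sub>0" and "i\<^sub>0 < n"
  shows "num_b_levels (\<lambda>i. if (i + i\<^sub>0) mod n = 0 then L i\<^sub>0 else \<not> L ((i + i\<^sub>0) mod n)) n
      + num_b_levels L n = (if L i\<^sub>0 then n else n - 2)"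
proof -
  let ?N = "{l \<in> {1..<n}. \<not> L l}"
  have N: "card ?N + num_b_levels L n = n - 1"
    using num_b_levels_not[of L n] unfolding num_b_levels_def by simp
  have "num_b_levels (\<lambda>i. if (i + i\<^sub>0) mod n = 0 then L i\<^sub>0 else \<not> L ((i + i\<^sub>0) mod n)) n
      = card {i \<in> {..<n}. i \<noteq> i\<^sub>0 \<and> (if i = 0 then L i\<^sub>0 else \<not> L i)}"
    using num_b_levels_rotate[OF assms(2), of "\<lambda>l. if l = 0 then L i\<^sub>0 else \<not> L l"] by simp
  also have "{i \<in> {..<n}. i \<noteq> i\<^sub>0 \<and> (if i = 0 then L i\<^sub>0 else \<not> L i)}
      = (if L i\<^sub>0 then insert 0 ?N else ?N - {i\<^sub>0})"
    using assms by auto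
  also have "card \<dots> = (if L i\<^sub>0 then card ?N + 1 else card ?N - 1)"
    using assms by (simp add: card_Diff_singleton)
  finally have "num_b_levels (\<lambda>i. if (i + i\<^sub>0) mod n = 0 then L i\<^sub>0 else \<not> L ((i + i\<^sub>0) mod n)) n
      = (if L i\<^sub>0 then card ?N + 1 else card ?N - 1)" .
  moreover have "\<not> L i\<^sub>0 \<Longrightarrow> 0 < card ?N"
    using assms by (subst card_gt_0_iff) auto
  ultimately show ?thesis using N assms by (cases "L i\<^sub>0") auto
qed

lemma complementary_shift_exists:
  fixes j\<^sub>1 j\<^sub>2 m :: nat
  assumes "j\<^sub>1 < m" and "j\<^sub>1 + j\<^sub>2 + 1 = m \<or> j\<^sub>1 + j\<^sub>2 = m \<or> j\<^sub>1 + j\<^sub>2 + 2 = m"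
  obtains t where "t < m"
    and "\<And>p. 1 \<le> p \<Longrightarrow> p < m \<Longrightarrow> p \<noteq> t \<Longrightarrow> (p \<le> j\<^sub>1) \<noteq> ((p + (m - t)) mod m \<le> j\<^sub>2)"
proof -
  define t where "t = (if j\<^sub>1 + j\<^sub>2 + 2 = m then j\<^sub>1 + 1 else j\<^sub>1)"
  have "t < m" using assms unfolding t_def by auto
  moreover have "(p \<le> j\<^sub>1) \<noteq> ((p + (m - t)) mod m \<le> j\<^sub>2)" if "1 \<le> p" "p < m" "p \<noteq> t" for p
    using that \<open>t < m\<close> assms mod_add_diff_self[of p m t] unfolding t_def by auto
  ultimately show ?thesis using that by blast
qed

lemma level_count_cases:
  fixes j\<^sub>1 j\<^sub>2 k\<^sub>1 k\<^sub>2 r m :: nat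
  assumes "j\<^sub>1 < m" and "j\<^sub>2 < m" and "k\<^sub>1 \<le> r - 1" and "k\<^sub>2 \<le> r - 1" and "2 \<le> m"
    and "j\<^sub>1 + m * k\<^sub>1 + (j\<^sub>2 + m * k\<^sub>2) \<in> {r * m, r * m - 1, r * m - 2}"
  obtains "k\<^sub>1 + k\<^sub>2 + 1 = r" and "j\<^sub>1 + j\<^sub>2 + 1 = m \<or> j\<^sub>1 + j\<^sub>2 = m \<or> j\<^sub>1 + j\<^sub>2 + 2 = m"
    | "k\<^sub>1 + k\<^sub>2 = r" and "j\<^sub>1 = 0" and "j\<^sub>2 = 0"
    | "k\<^sub>1 + k\<^sub>2 + 2 = r" and "j\<^sub>1 + 1 = m" and "j\<^sub>2 + 1 = m"
proof -
  define J K where "J = j\<^sub>1 + j\<^sub>2" and "K = k\<^sub>1 + k\<^sub>2"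
  have sum: "J + m * K \<in> {m * r, m * r - 1, m * r - 2}"
    using assms(6) unfolding J_def K_def by (simp add: algebra_simps)
  have J: "J + 2 \<le> 2 * m" using assms(1,2) unfolding J_def by simp
  have "J + m * K \<le> m * r" using sum by auto
  hence "m * K \<le> m * r" by linarith
  hence "K \<le> r" using assms(5) by simp
  have "m * r \<le> J + m * K + 2" using sum by auto
  hence "m * r \<le> m * (K + 2)" using J by (simp add: algebra_simps)
  hence "r \<le> K + 2" using assms(5) mult_le_cancel1[of m r "K + 2"] by linarith
  then consider "K = r" | "K + 1 = r" | "K + 2 = r" using \<open>K \<le> r\<close> by linarith
  thus ?thesis
  proof cases
    case 1
    hence "J = 0" using sum assms(5) by auto
    thus ?thesis using 1 that(2) unfolding J_def K_def by simp
  next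
    case 2
    hence "m * r = m * K + m" by (metis add.commute mult_Suc_right Suc_eq_plus1)
    hence "J + 1 = m \<or> J = m \<or> J + 2 = m" using sum assms(5) by auto
    thus ?thesis using 2 that(1) unfolding J_def K_def by simp
  next
    case 3
    hence "m * r = m * K + 2 * m" by (simp add: algebra_simps flip: 3)
    hence "J + 2 = 2 * m" using sum J assms(5) by auto
    thus ?thesis using 3 that(3) assms(1,2) unfolding J_def K_def by simp
  qed
qed

section \<open>Coordinates in a group generated by two elements\<close>

locale two_generated_abelian = comm_group G for G (structure) +
  fixes a b
  assumes a_closed [simp]: "a \<in> carrier G" and b_closed [simp]: "b \<in> carrier G"
    and a_neq_b: "a \<noteq> b"
    and finite_carrier: "finite (carrier G)"
    and generate_ab: "generate G {a, b} = carrier G"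
begin

definition c where "c = a \<otimes> inv b"
definition m where "m = ord c"
definition r where "r = (LEAST i::nat. 0 < i \<and> (\<exists>p::nat. a [^] i = c [^] p))"
definition twist where "twist = (SOME p. p < m \<and> a [^] r = c [^] p)"

lemma c_closed [simp]: "c \<in> carrier G"
  unfolding c_def by simp

lemma c_neq_one: "c \<noteq> \<one>"
proof
  assume "c = \<one>"
  hence "a \<otimes> inv b \<otimes> b = b" unfolding c_def by simp
  hence "a = b" by (simp add: m_assoc)
  thus False using a_neq_b by simp
qed

lemma two_le_m: "2 \<le> m"
  using ord_ge_1[OF finite_carrier c_closed] ord_eq_1[OF c_closed] c_neq_one
  unfolding m_def by linarith

lemma c_pow_m [simp]: "c [^] m = \<one>"
  unfolding m_def by simp

lemma c_pow_eq_iff: "c [^] (p::nat) = c [^] (q::nat) \<longleftrightarrow> p mod m = q mod m"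
proof -
  have "c [^] p = c [^] q \<longleftrightarrow> int m dvd int q - int p"
    using int_pow_eq[OF c_closed, of "int p" "int q"] unfolding m_def by (simp add: int_pow_int)
  also have "\<dots> \<longleftrightarrow> int q mod int m = int p mod int m" by (simp add: mod_eq_dvd_iff)
  also have "\<dots> \<longleftrightarrow> p mod m = q mod m" by (auto simp flip: of_nat_mod)
  finally show ?thesis .
qed

lemma c_pow_mod_m: "c [^] (p::nat) = c [^] (p mod m)"
  by (simp add: c_pow_eq_iff)

lemma c_mult_b: "c \<otimes> b = a"
  unfolding c_def by (simp add: m_assoc)

lemma b_eq: "b = a \<otimes> c [^] (m - 1)"
proof -
  have "c [^] (m - 1) \<otimes> c = \<one>"
    using two_le_m nat_pow_Suc[of c "m - 1"] by (simp del: nat_pow_Suc)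
  hence "a \<otimes> c [^] (m - 1) \<otimes> c = a" by (simp add: m_assoc)
  also have "a = b \<otimes> c" using c_mult_b by (simp add: m_comm)
  finally show ?thesis using r_cancel[of c b "a \<otimes> c [^] (m - 1)"] by simp
qed

lemma r_pos: "0 < r" and a_pow_r_in_c: "\<exists>p::nat. a [^] r = c [^] p"
proof -
  have "0 < ord a \<and> (\<exists>p::nat. a [^] ord a = c [^] p)"
    using ord_ge_1[OF finite_carrier a_closed] by (auto intro: exI[of _ 0])
  hence "0 < r \<and> (\<exists>p::nat. a [^] r = c [^] p)"
    unfolding r_def by (rule LeastI)
  thus "0 < r" and "\<exists>p::nat. a [^] r = c [^] p" by auto
qed

lemma a_pow_notin_c: "0 < i \<Longrightarrow> i < r \<Longrightarrow> a [^] (i::nat) \<noteq> c [^] (p::nat)"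
  unfolding r_def using not_less_Least by blast

lemma twist_less_m: "twist < m" and a_pow_r: "a [^] r = c [^] twist"
proof -
  obtain p :: nat where "a [^] r = c [^] p" using a_pow_r_in_c by blast
  hence "p mod m < m \<and> a [^] r = c [^] (p mod m)" using two_le_m c_pow_mod_m[of p] by simp
  hence "twist < m \<and> a [^] r = c [^] twist" unfolding twist_def by (rule someI)
  thus "twist < m" and "a [^] r = c [^] twist" by auto
qed

definition vtx where "vtx y (i::nat) (p::nat) = y \<otimes> a [^] i \<otimes> c [^] p"

lemma vtx_closed [simp]: "y \<in> carrier G \<Longrightarrow> vtx y i p \<in> carrier G"
  unfolding vtx_def by simp

lemma vtx_0_0 [simp]: "y \<in> carrier G \<Longrightarrow> vtx y 0 0 = y"
  unfolding vtx_def by simp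

lemma vtx_mult_a: "y \<in> carrier G \<Longrightarrow> vtx y i p \<otimes> a = vtx y (Suc i) p"
  unfolding vtx_def by (simp add: m_ac)

lemma vtx_mult_c: "y \<in> carrier G \<Longrightarrow> vtx y i p \<otimes> c = vtx y i (Suc p)"
  unfolding vtx_def by (simp add: m_ac)

lemma vtx_mult_c_pow: "y \<in> carrier G \<Longrightarrow> vtx y i p \<otimes> c [^] (k::nat) = vtx y i (p + k)"
  unfolding vtx_def by (simp add: m_assoc nat_pow_mult)

lemma vtx_mult_a_pow: "y \<in> carrier G \<Longrightarrow> vtx y i p \<otimes> a [^] (k::nat) = vtx y (i + k) p"
proof -
  assume "y \<in> carrier G"
  hence "vtx y i p \<otimes> a [^] k = y \<otimes> (a [^] i \<otimes> a [^] k) \<otimes> c [^] p"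
    unfolding vtx_def by (simp add: m_ac)
  thus ?thesis unfolding vtx_def by (simp add: nat_pow_mult)
qed

lemma vtx_mult_b: "y \<in> carrier G \<Longrightarrow> vtx y i p \<otimes> b = vtx y (Suc i) (p + (m - 1))"
  by (subst b_eq) (simp add: vtx_mult_a vtx_mult_c_pow flip: m_assoc)

lemma vtx_vtx: "y \<in> carrier G \<Longrightarrow> vtx (vtx y i p) i' p' = vtx y (i + i') (p + p')"
  using vtx_mult_a_pow vtx_mult_c_pow by (simp add: vtx_def[of "vtx y i p"])

lemma vtx_mod_m: "vtx y i p = vtx y i (p mod m)"
  unfolding vtx_def using c_pow_mod_m by simp

lemma vtx_normalize:
  assumes "y \<in> carrier G"
  shows "vtx y i p = vtx y (i mod r) ((p + twist * (i div r)) mod m)"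
proof -
  have "a [^] i = a [^] (r * (i div r)) \<otimes> a [^] (i mod r)"
    by (simp add: nat_pow_mult)
  also have "\<dots> = c [^] (twist * (i div r)) \<otimes> a [^] (i mod r)"
    by (simp add: a_pow_r flip: nat_pow_pow)
  finally have "vtx y i p = vtx y (i mod r) p \<otimes> c [^] (twist * (i div r))"
    unfolding vtx_def using assms by (simp add: m_ac)
  also have "\<dots> = vtx y (i mod r) ((p + twist * (i div r)) mod m)"
    using assms vtx_mult_c_pow vtx_mod_m by simp
  finally show ?thesis .
qed

lemma vtx_inj:
  assumes y: "y \<in> carrier G" and "i < r" "i' < r" "p < m" "p' < m"
    and eq: "vtx y i p = vtx y i' p'"
  shows "i = i' \<and> p = p'"
proof -
  have level_eq: "j = j'" if "j' \<le> j" "j < r" "q < m" "vtx y j q = vtx y j' q'" for j j' q q'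
  proof -
    have "vtx y j' 0 \<otimes> (a [^] (j - j') \<otimes> c [^] q) = vtx y j' 0 \<otimes> c [^] q'"
      using that y by (simp add: vtx_mult_a_pow vtx_mult_c_pow flip: m_assoc)
    hence "a [^] (j - j') \<otimes> c [^] q \<otimes> c [^] (m - q) = c [^] (q' + (m - q))"
      using y by (simp add: nat_pow_mult)
    hence "a [^] (j - j') = c [^] (q' + (m - q))"
      using \<open>q < m\<close> by (simp add: m_assoc nat_pow_mult)
    moreover have "j - j' < r" using that by simp
    ultimately have "\<not> 0 < j - j'" using a_pow_notin_c by blast
    thus "j = j'" using \<open>j' \<le> j\<close> by simp
  qed
  have "i = i'"
    using level_eq[of i' i p p'] level_eq[of i i' p' p] assms by (cases "i' \<le> i") auto
  hence "vtx y i 0 \<otimes> c [^] p = vtx y i 0 \<otimes> c [^] p'"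
    using eq y by (simp add: vtx_mult_c_pow)
  hence "p mod m = p' mod m" using y by (simp add: c_pow_eq_iff)
  thus ?thesis using \<open>i = i'\<close> assms by simp
qed

lemma inv_eq_pow_ord: "x \<in> carrier G \<Longrightarrow> inv x = x [^] (ord x - 1)"
proof -
  assume x: "x \<in> carrier G"
  have "x [^] (ord x - 1) \<otimes> x = x [^] ord x"
    using ord_ge_1[OF finite_carrier x] nat_pow_Suc[of x "ord x - 1"] by (simp del: nat_pow_Suc)
  thus ?thesis using x inv_equality by simp
qed

lemma generated_elem_form: "g \<in> generate G {a, b} \<Longrightarrow> \<exists>I P. g = a [^] (I::nat) \<otimes> c [^] (P::nat)"
proof (induction rule: generate.induct)
  case one
  show ?case by (intro exI[of _ 0]) simp
next
  case (incl h)
  hence "h = a [^] (1::nat) \<otimes> c [^] (0::nat) \<or> h = a [^] (1::nat) \<otimes> c [^] (m - 1)"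
    using b_eq by auto
  thus ?case by blast
next
  case (inv h)
  hence "h = a \<otimes> c [^] (0::nat) \<or> h = a \<otimes> c [^] (m - 1)" using b_eq by auto
  then obtain P :: nat where h: "h = a \<otimes> c [^] P" by blast
  have "inv h = (a \<otimes> c [^] P) [^] (ord h - 1)"
    using inv_eq_pow_ord h by simp
  also have "\<dots> = a [^] (ord h - 1) \<otimes> c [^] (P * (ord h - 1))"
    by (simp add: pow_mult_distrib m_comm nat_pow_pow)
  finally show ?case by blast
next
  case (eng h\<^sub>1 h\<^sub>2)
  then obtain I P I' P' :: nat where "h\<^sub>1 = a [^] I \<otimes> c [^] P" and "h\<^sub>2 = a [^] I' \<otimes> c [^] P'"
    by blast
  hence "h\<^sub>1 \<otimes> h\<^sub>2 = (a [^] I \<otimes> a [^] I') \<otimes> (c [^] P \<otimes> c [^] P')" by (simp add: m_ac)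
  also have "\<dots> = a [^] (I + I') \<otimes> c [^] (P + P')" by (simp add: nat_pow_mult)
  finally show ?case by blast
qed

lemma vtx_exists:
  assumes y: "y \<in> carrier G" and u: "u \<in> carrier G"
  shows "\<exists>i p. i < r \<and> p < m \<and> u = vtx y i p"
proof -
  have "inv y \<otimes> u \<in> generate G {a, b}" using generate_ab y u by simp
  then obtain I P :: nat where "inv y \<otimes> u = a [^] I \<otimes> c [^] P"
    using generated_elem_form by blast
  moreover have "u = y \<otimes> (inv y \<otimes> u)" using y u by (simp flip: m_assoc)
  ultimately have "u = vtx y I P" unfolding vtx_def using y by (simp add: m_assoc)
  hence "u = vtx y (I mod r) ((P + twist * (I div r)) mod m)" using vtx_normalize[OF y] by simp
  moreover have "I mod r < r" and "(P + twist * (I div r)) mod m < m"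
    using r_pos two_le_m by simp_all
  ultimately show ?thesis by blast
qed

definition coords where "coords y u = (THE (i, p). i < r \<and> p < m \<and> u = vtx y i p)"
definition level where "level y u = fst (coords y u)"
definition position where "position y u = snd (coords y u)"

lemma coords_vtx: "y \<in> carrier G \<Longrightarrow> i < r \<Longrightarrow> p < m \<Longrightarrow> coords y (vtx y i p) = (i, p)"
  unfolding coords_def by (rule the_equality) (use vtx_inj in auto)

lemma level_position:
  "y \<in> carrier G \<Longrightarrow> u \<in> carrier G \<Longrightarrow>
     level y u < r \<and> position y u < m \<and> u = vtx y (level y u) (position y u)"
  using vtx_exists[of y u] coords_vtx unfolding level_def position_def by auto

lemma level_vtx: "y \<in> carrier G \<Longrightarrow> level y (vtx y i p) = i mod r"
  using vtx_normalize[of y i p] coords_vtx[of y "i mod r" "(p + twist * (i div r)) mod m"]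
    r_pos two_le_m
  unfolding level_def by simp

lemma position_vtx: "y \<in> carrier G \<Longrightarrow> position y (vtx y i p) = (p + twist * (i div r)) mod m"
  using vtx_normalize[of y i p] coords_vtx[of y "i mod r" "(p + twist * (i div r)) mod m"]
    r_pos two_le_m
  unfolding position_def by simp

lemma level_self [simp]: "y \<in> carrier G \<Longrightarrow> level y y = 0"
  using level_vtx[of y 0 0] by simp

lemma vtx_eq_self_iff: "y \<in> carrier G \<Longrightarrow> p < m \<Longrightarrow> vtx y 0 p = y \<longleftrightarrow> p = 0"
  using vtx_inj[of y 0 0 p 0] r_pos two_le_m by auto

lemma position_neq_0:
  assumes "y \<in> carrier G" and "u \<in> carrier G" and "u \<noteq> y" and "level y u = 0"
  shows "position y u \<noteq> 0"
proof
  assume "position y u = 0"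
  thus False using level_position[of y u] assms by simp
qed

lemma card_carrier: "card (carrier G) = r * m"
proof -
  have "bij_betw (\<lambda>(i, p). vtx \<one> i p) ({..<r} \<times> {..<m}) (carrier G)"
  proof (rule bij_betwI')
    fix x x' assume "x \<in> {..<r} \<times> {..<m}" and "x' \<in> {..<r} \<times> {..<m}"
    thus "((\<lambda>(i, p). vtx \<one> i p) x = (\<lambda>(i, p). vtx \<one> i p) x') = (x = x')"
      using vtx_inj[of \<one>] by (cases x, cases x') auto
  next
    fix x assume "x \<in> {..<r} \<times> {..<m}"
    thus "(\<lambda>(i, p). vtx \<one> i p) x \<in> carrier G" by (cases x) simp
  next
    fix u assume "u \<in> carrier G"
    thus "\<exists>x\<in>{..<r} \<times> {..<m}. u = (\<lambda>(i, p). vtx \<one> i p) x" using vtx_exists[of \<one> u] by auto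
  qed
  thus ?thesis using bij_betw_same_card by (fastforce simp: card_cartesian_product)
qed

section \<open>Standard paths\<close>

definition exits_b where
  "exits_b y j L u = (if level y u = 0 then position y u \<le> j else L (level y u))"

(* The successor of the terminal vertex y is the first vertex vtx y 1 j; this makes
   std_path y j L the orbit of y. *)
definition std_succ where
  "std_succ y j L u = (if u = y then vtx y 1 j else u \<otimes> (if exits_b y j L u then b else a))"

definition std_path where
  "std_path y j L = map (\<lambda>t. (std_succ y j L ^^ Suc t) y) [0..<r * m]"

(* Where a walk from level 0 returns to level 0 after r steps: each of the k b-levels
   contributes m - 1, and a^r = c^twist contributes twist. *)
definition return_pos where
  "return_pos j k p = (exit_pos j p + k * (m - 1) + twist) mod m"

definition full_return_orbit where
  "full_return_orbit j k \<longleftrightarrow> inj_on (\<lambda>q. (return_pos j k ^^ q) 0) {..<m}"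

lemma std_succ_closed: "y \<in> carrier G \<Longrightarrow> u \<in> carrier G \<Longrightarrow> std_succ y j L u \<in> carrier G"
  unfolding std_succ_def by simp

lemma std_succ_iter_closed: "y \<in> carrier G \<Longrightarrow> u \<in> carrier G \<Longrightarrow> (std_succ y j L ^^ t) u \<in> carrier G"
  by (induction t) (simp_all add: std_succ_closed)

lemma level_std_succ:
  assumes y: "y \<in> carrier G" and u: "u \<in> carrier G"
  shows "level y (std_succ y j L u) = Suc (level y u) mod r"
proof (cases "u = y")
  case True
  thus ?thesis using y level_vtx[OF y, of 1 j] by (simp add: std_succ_def)
next
  case False
  let ?l = "level y u" and ?p = "position y u"
  have "std_succ y j L u = vtx y ?l ?p \<otimes> (if exits_b y j L u then b else a)"
    using False level_position[OF y u] by (simp add: std_succ_def)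
  also have "\<dots> = (if exits_b y j L u then vtx y (Suc ?l) (?p + (m - 1)) else vtx y (Suc ?l) ?p)"
    using y vtx_mult_a vtx_mult_b by simp
  finally show ?thesis using level_vtx[OF y] by simp
qed

lemma level_std_succ_iter: "y \<in> carrier G \<Longrightarrow> level y ((std_succ y j L ^^ t) y) = t mod r"
  by (induction t) (simp_all add: level_std_succ std_succ_iter_closed mod_Suc_eq)

lemma std_succ_level_0:
  assumes y: "y \<in> carrier G" and p: "p < m"
  shows "std_succ y j L (vtx y 0 p) = vtx y 1 (exit_pos j p)"
proof (cases "p = 0")
  case True
  thus ?thesis using y by (simp add: std_succ_def exit_pos_def)
next
  case False
  hence "vtx y 0 p \<noteq> y" using vtx_eq_self_iff[OF y p] by simp
  moreover have "level y (vtx y 0 p) = 0" and "position y (vtx y 0 p) = p"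
    using level_vtx[OF y] position_vtx[OF y] p by simp_all
  moreover have "vtx y 1 (p + (m - 1)) = vtx y 1 (p - 1)"
  proof -
    have "(p + (m - 1)) mod m = p - 1"
      using mod_add_diff_self[of p m 1] False p two_le_m by simp
    thus ?thesis by (metis vtx_mod_m)
  qed
  ultimately show ?thesis
    using False y vtx_mult_a[of y 0 p] vtx_mult_b[of y 0 p]
    by (simp add: std_succ_def exits_b_def exit_pos_def)
qed

lemma std_succ_level_pos:
  "u \<noteq> y \<Longrightarrow> level y u \<noteq> 0 \<Longrightarrow> std_succ y j L u = u \<otimes> (if L (level y u) then b else a)"
  unfolding std_succ_def exits_b_def by simp

lemma std_succ_iter_level_0:
  assumes y: "y \<in> carrier G" and p: "p < m" and i: "1 \<le> i" "i \<le> r"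
  shows "(std_succ y j L ^^ i) (vtx y 0 p) = vtx y i (exit_pos j p + num_b_levels L i * (m - 1))"
  using i
proof (induction i rule: dec_induct)
  case base
  thus ?case using std_succ_level_0[OF y p] by simp
next
  case (step i)
  let ?u = "vtx y i (exit_pos j p + num_b_levels L i * (m - 1))"
  have "level y ?u = i" using level_vtx[OF y] step by simp
  moreover have "?u \<noteq> y" using calculation level_self[OF y] step.hyps by auto
  ultimately have "std_succ y j L ?u = ?u \<otimes> (if L i then b else a)"
    using std_succ_level_pos step.hyps by simp
  thus ?case
    using step vtx_mult_a[OF y] vtx_mult_b[OF y] num_b_levels_Suc[OF step.hyps(1)]
    by (simp add: algebra_simps)
qed

lemma return_pos_less: "return_pos j k p < m"
  unfolding return_pos_def using two_le_m by simp

lemma return_pos_iter_less: "(return_pos j k ^^ q) 0 < m"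
  using two_le_m return_pos_less by (cases q) auto

lemma inj_on_return_pos: "j < m \<Longrightarrow> inj_on (return_pos j k) {..<m}"
proof (rule inj_onI)
  fix p p' assume "j < m" and "p \<in> {..<m}" and "p' \<in> {..<m}" and "return_pos j k p = return_pos j k p'"
  hence "(exit_pos j p + (k * (m - 1) + twist)) mod m = (exit_pos j p' + (k * (m - 1) + twist)) mod m"
    unfolding return_pos_def by (simp add: add.assoc)
  moreover have "exit_pos j p < m" and "exit_pos j p' < m"
    using exit_pos_less \<open>j < m\<close> \<open>p \<in> {..<m}\<close> \<open>p' \<in> {..<m}\<close> by auto
  ultimately have "exit_pos j p = exit_pos j p'" using mod_add_right_cancel_less by blast
  thus "p = p'" using inj_exit_pos by (simp add: inj_eq)
qed

lemma std_succ_iter_r: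
  assumes "y \<in> carrier G" and "p < m"
  shows "(std_succ y j L ^^ r) (vtx y 0 p) = vtx y 0 (return_pos j (num_b_levels L r) p)"
  using std_succ_iter_level_0[OF assms, where i = r] r_pos vtx_normalize[OF assms(1), of r]
  unfolding return_pos_def by simp

lemma std_succ_iter_mult_r:
  assumes "y \<in> carrier G"
  shows "(std_succ y j L ^^ (q * r)) y = vtx y 0 ((return_pos j (num_b_levels L r) ^^ q) 0)"
proof (induction q)
  case 0
  show ?case using assms by simp
next
  case (Suc q)
  have "(std_succ y j L ^^ (Suc q * r)) y = (std_succ y j L ^^ r) ((std_succ y j L ^^ (q * r)) y)"
    by (simp add: funpow_add)
  thus ?case using Suc std_succ_iter_r[OF assms return_pos_iter_less] by simp
qed

lemma std_succ_iter_level_0_inj: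
  assumes y: "y \<in> carrier G" and "j < m" and "i < r" and "p < m" and "p' < m"
    and eq: "(std_succ y j L ^^ i) (vtx y 0 p) = (std_succ y j L ^^ i) (vtx y 0 p')"
  shows "p = p'"
proof (cases "i = 0")
  case True
  thus ?thesis using eq vtx_inj[OF y] assms by simp
next
  case False
  let ?K = "num_b_levels L i * (m - 1)"
  have "vtx y i ((exit_pos j p + ?K) mod m) = vtx y i ((exit_pos j p' + ?K) mod m)"
    using eq std_succ_iter_level_0[OF y, of _ i j L] False assms vtx_mod_m by simp
  hence "(exit_pos j p + ?K) mod m = (exit_pos j p' + ?K) mod m"
    using vtx_inj[OF y] assms two_le_m by simp
  hence "exit_pos j p = exit_pos j p'"
    using mod_add_right_cancel_less exit_pos_less assms by blast
  thus ?thesis using inj_exit_pos by (simp add: inj_eq)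
qed

lemma std_succ_iter_decompose:
  "(std_succ y j L ^^ t) y = (std_succ y j L ^^ (t mod r)) ((std_succ y j L ^^ (t div r * r)) y)"
  by (metis comp_apply funpow_add mod_div_mult_eq)

lemma inj_on_std_succ_iter:
  assumes y: "y \<in> carrier G" and j: "j < m" and orbit: "full_return_orbit j (num_b_levels L r)"
  shows "inj_on (\<lambda>t. (std_succ y j L ^^ t) y) {..<r * m}"
proof (rule inj_onI)
  fix t t' assume "t \<in> {..<r * m}" and "t' \<in> {..<r * m}"
    and eq: "(std_succ y j L ^^ t) y = (std_succ y j L ^^ t') y"
  hence "t div r < m" and "t' div r < m" by (auto simp: less_mult_imp_div_less mult.commute)
  have rem: "t mod r = t' mod r" using eq level_std_succ_iter[OF y] by metis
  let ?F = "return_pos j (num_b_levels L r)"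
  have "(std_succ y j L ^^ (t mod r)) (vtx y 0 ((?F ^^ (t div r)) 0))
      = (std_succ y j L ^^ (t mod r)) (vtx y 0 ((?F ^^ (t' div r)) 0))"
    using eq rem std_succ_iter_decompose std_succ_iter_mult_r[OF y] by metis
  moreover have "t mod r < r" using r_pos by simp
  ultimately have "(?F ^^ (t div r)) 0 = (?F ^^ (t' div r)) 0"
    using std_succ_iter_level_0_inj[OF y j _ return_pos_iter_less return_pos_iter_less] by blast
  hence "t div r = t' div r"
    using orbit \<open>t div r < m\<close> \<open>t' div r < m\<close> unfolding full_return_orbit_def inj_on_def by blast
  thus "t = t'" using rem by (metis mod_div_mult_eq)
qed

lemma std_succ_iter_card:
  assumes y: "y \<in> carrier G" and j: "j < m" and orbit: "full_return_orbit j (num_b_levels L r)"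
  shows "(std_succ y j L ^^ (r * m)) y = y"
proof -
  have "(return_pos j (num_b_levels L r) ^^ m) 0 = 0"
    using funpow_full_orbit_returns[OF inj_on_return_pos[OF j] return_pos_less] two_le_m orbit
    unfolding full_return_orbit_def by simp
  thus ?thesis using std_succ_iter_mult_r[OF y, of m] y by (simp add: mult.commute)
qed

lemma length_std_path [simp]: "length (std_path y j L) = r * m"
  unfolding std_path_def by simp

lemma nth_std_path: "t < r * m \<Longrightarrow> std_path y j L ! t = (std_succ y j L ^^ Suc t) y"
  unfolding std_path_def by simp

lemma two_le_card: "2 \<le> r * m"
  using r_pos two_le_m by (metis mult_1 mult_le_mono One_nat_def Suc_leI)

context
  fixes y j L
  assumes y: "y \<in> carrier G" and j: "j < m" and orbit: "full_return_orbit j (num_b_levels L r)"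
begin

lemma std_path_nth_conv_mod: "t < r * m \<Longrightarrow> std_path y j L ! t = (std_succ y j L ^^ (Suc t mod (r * m))) y"
  using std_succ_iter_card[OF y j orbit] nth_std_path[of t] by (cases "Suc t = r * m") auto

lemma distinct_std_path: "distinct (std_path y j L)"
proof -
  have "inj_on (\<lambda>t. Suc t mod (r * m)) {..<r * m}"
    by (rule inj_onI) (auto simp: mod_Suc split: if_splits)
  moreover have "(\<lambda>t. Suc t mod (r * m)) ` {..<r * m} \<subseteq> {..<r * m}"
    using r_pos two_le_m by auto
  ultimately have "inj_on ((\<lambda>t. (std_succ y j L ^^ t) y) \<circ> (\<lambda>t. Suc t mod (r * m))) {..<r * m}"
    using inj_on_std_succ_iter[OF y j orbit] by (blast intro: comp_inj_on inj_on_subset)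
  hence "inj_on (\<lambda>t. std_path y j L ! t) {..<r * m}"
    by (rule inj_on_cong[THEN iffD1, rotated]) (simp add: std_path_nth_conv_mod)
  thus ?thesis unfolding distinct_conv_nth inj_on_def by auto
qed

lemma set_std_path: "set (std_path y j L) = carrier G"
proof -
  have "set (std_path y j L) \<subseteq> carrier G"
    unfolding std_path_def using std_succ_iter_closed[OF y y] by (auto simp del: funpow.simps)
  moreover have "card (set (std_path y j L)) = r * m"
    using distinct_std_path distinct_card by fastforce
  ultimately show ?thesis using card_subset_eq[OF finite_carrier] card_carrier by simp
qed

lemma last_std_path: "std_path y j L ! (r * m - 1) = y"
proof -
  have "Suc (r * m - 1) = r * m" using two_le_card by simp
  thus ?thesis using std_path_nth_conv_mod[of "r * m - 1"] y by simp
qed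

lemma std_path_nth_neq_last: "Suc t < r * m \<Longrightarrow> std_path y j L ! t \<noteq> y"
  using last_std_path distinct_std_path nth_eq_iff_index_eq[of "std_path y j L" t "r * m - 1"]
  by auto

lemma path_arcs_std_path:
  "path_arcs (std_path y j L) = {(u, std_succ y j L u) | u. u \<in> carrier G \<and> u \<noteq> y}"
proof (intro equalityI subsetI)
  fix x assume "x \<in> path_arcs (std_path y j L)"
  then obtain t where t: "Suc t < r * m" and x: "x = (std_path y j L ! t, std_path y j L ! Suc t)"
    unfolding path_arcs_def by auto
  have "std_path y j L ! Suc t = std_succ y j L (std_path y j L ! t)"
    using t by (simp add: nth_std_path)
  moreover have "std_path y j L ! t \<in> carrier G"
    using t set_std_path nth_mem[of t "std_path y j L"] by simp
  ultimately show "x \<in> {(u, std_succ y j L u) | u. u \<in> carrier G \<and> u \<noteq> y}"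
    using x std_path_nth_neq_last[OF t] by auto
next
  fix x assume "x \<in> {(u, std_succ y j L u) | u. u \<in> carrier G \<and> u \<noteq> y}"
  then obtain u where u: "u \<in> carrier G" "u \<noteq> y" and x: "x = (u, std_succ y j L u)" by auto
  then obtain t where t: "t < r * m" and "std_path y j L ! t = u"
    using set_std_path by (metis length_std_path in_set_conv_nth)
  moreover have "Suc t < r * m" using t last_std_path u \<open>std_path y j L ! t = u\<close>
    by (metis Suc_lessI diff_Suc_1)
  moreover have "std_path y j L ! Suc t = std_succ y j L u"
    using calculation by (simp add: nth_std_path)
  ultimately have "x = (std_path y j L ! t, std_path y j L ! Suc t)" and "Suc t < r * m"
    using x by simp_all
  thus "x \<in> path_arcs (std_path y j L)" unfolding path_arcs_def by auto
qed

lemma is_ham_path_std_path: "is_ham_path G a b (std_path y j L)"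
  unfolding is_ham_path_def path_arcs_std_path cay_arc_def std_succ_def
  using distinct_std_path set_std_path by auto

end

lemma full_return_orbit_if_distinct:
  assumes y: "y \<in> carrier G" and dist: "distinct (std_path y j L)"
  shows "full_return_orbit j (num_b_levels L r)"
  unfolding full_return_orbit_def
proof (rule inj_onI)
  let ?F = "return_pos j (num_b_levels L r)"
  have bound: "Suc k * r - 1 < r * m" if "k < m" for k
  proof -
    have "Suc k * r \<le> r * m" using that by (metis Suc_leI mult.commute mult_le_mono1)
    thus ?thesis using r_pos by simp
  qed
  have nth: "std_path y j L ! (Suc k * r - 1) = vtx y 0 ((?F ^^ Suc k) 0)" if "k < m" for k
  proof -
    have "Suc (Suc k * r - 1) = Suc k * r" using r_pos by simp
    thus ?thesis using nth_std_path[OF bound[OF that]] std_succ_iter_mult_r[OF y, of "Suc k"] by simp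
  qed
  fix q q' assume "q \<in> {..<m}" and "q' \<in> {..<m}" and "(?F ^^ q) 0 = (?F ^^ q') 0"
  hence "std_path y j L ! (Suc q * r - 1) = std_path y j L ! (Suc q' * r - 1)"
    using nth by simp
  hence "Suc q * r - 1 = Suc q' * r - 1"
    using nth_eq_iff_index_eq[OF dist] bound \<open>q \<in> {..<m}\<close> \<open>q' \<in> {..<m}\<close> by simp
  hence "Suc q * r = Suc q' * r" using r_pos by (metis Suc_diff_1 mult_pos_pos zero_less_Suc)
  thus "q = q'" using r_pos by simp
qed

lemma delta_b_std_path_eq_card:
  assumes y: "y \<in> carrier G" and j: "j < m" and orbit: "full_return_orbit j (num_b_levels L r)"
  shows "delta G b (std_path y j L) = card {u \<in> carrier G. u \<noteq> y \<and> exits_b y j L u}"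
proof -
  have exits_b_iff: "std_succ y j L u = u \<otimes> b \<longleftrightarrow> exits_b y j L u"
    if "u \<in> carrier G" and "u \<noteq> y" for u
    using that a_neq_b by (simp add: std_succ_def)
  have "{x \<in> path_arcs (std_path y j L). snd x = fst x \<otimes> b}
      = (\<lambda>u. (u, std_succ y j L u)) ` {u \<in> carrier G. u \<noteq> y \<and> exits_b y j L u}"
    unfolding path_arcs_std_path[OF y j orbit] by (auto simp: exits_b_iff)
  moreover have "inj_on (\<lambda>u. (u, std_succ y j L u)) A" for A
    by (rule inj_onI) simp
  ultimately show ?thesis unfolding delta_def by (simp add: card_image)
qed

lemma card_exits_b:
  assumes y: "y \<in> carrier G" and j: "j < m"
  shows "card {u \<in> carrier G. u \<noteq> y \<and> exits_b y j L u} = j + m * num_b_levels L r"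
proof -
  define Z where "Z = ({0} \<times> {1..j}) \<union> ({l \<in> {1..<r}. L l} \<times> {..<m})"
  have Z: "Z \<subseteq> {..<r} \<times> {..<m}" unfolding Z_def using j r_pos by auto
  have "{u \<in> carrier G. u \<noteq> y \<and> exits_b y j L u} = (\<lambda>(i, p). vtx y i p) ` Z"
  proof (intro equalityI subsetI)
    fix u assume "u \<in> {u \<in> carrier G. u \<noteq> y \<and> exits_b y j L u}"
    hence u: "u \<in> carrier G" "u \<noteq> y" "exits_b y j L u" by auto
    hence "(level y u, position y u) \<in> Z"
      using level_position[OF y u(1)] position_neq_0[OF y u(1,2)]
      unfolding Z_def exits_b_def by (auto split: if_splits)
    thus "u \<in> (\<lambda>(i, p). vtx y i p) ` Z"
      using level_position[OF y u(1)] by (auto intro: image_eqI[where x = "(level y u, position y u)"])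
  next
    fix u assume "u \<in> (\<lambda>(i, p). vtx y i p) ` Z"
    then obtain i p where ip: "(i, p) \<in> Z" and u: "u = vtx y i p" by auto
    hence "i < r" "p < m" using Z by auto
    hence "level y u = i" "position y u = p" using u level_vtx[OF y] position_vtx[OF y] by simp_all
    moreover have "u \<noteq> y"
      using ip u vtx_eq_self_iff[OF y \<open>p < m\<close>] calculation level_self[OF y] unfolding Z_def by auto
    ultimately show "u \<in> {u \<in> carrier G. u \<noteq> y \<and> exits_b y j L u}"
      using ip u y unfolding Z_def exits_b_def by auto
  qed
  moreover have "inj_on (\<lambda>(i, p). vtx y i p) Z"
  proof (rule inj_onI)
    fix x x' assume "x \<in> Z" "x' \<in> Z" "(\<lambda>(i, p). vtx y i p) x = (\<lambda>(i, p). vtx y i p) x'"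
    thus "x = x'" using Z vtx_inj[OF y] by (cases x, cases x') (simp, blast)
  qed
  moreover have "card Z = j + num_b_levels L r * m"
  proof -
    have "card Z = card ({0::nat} \<times> {1..j}) + card ({l \<in> {1..<r}. L l} \<times> {..<m})"
      unfolding Z_def by (intro card_Un_disjoint) auto
    thus ?thesis unfolding num_b_levels_def by (simp add: card_cartesian_product)
  qed
  ultimately show ?thesis by (simp add: card_image mult.commute)
qed

lemma delta_b_std_path:
  assumes "y \<in> carrier G" and "j < m" and "full_return_orbit j (num_b_levels L r)"
  shows "delta G b (std_path y j L) = j + m * num_b_levels L r"
  using delta_b_std_path_eq_card[OF assms] card_exits_b[OF assms(1,2)] by simp

lemma std_succ_neq_start:
  assumes y: "y \<in> carrier G" and j: "j < m" and w: "w \<in> carrier G" "w \<noteq> y"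
  shows "std_succ y j L w \<noteq> vtx y 1 j"
proof
  assume eq: "std_succ y j L w = vtx y 1 j"
  have exits_b_vtx: "exits_b y j L (vtx y 0 p) \<longleftrightarrow> p \<le> j" if "p < m" for p
    using that level_vtx[OF y] position_vtx[OF y] by (simp add: exits_b_def)
  show False
  proof (cases "exits_b y j L w")
    case True
    have "vtx y 0 (Suc j) \<otimes> b = vtx y 1 (j + m)"
      using vtx_mult_b[OF y] two_le_m by simp
    also have "\<dots> = vtx y 1 j" using vtx_mod_m[of y 1 "j + m"] vtx_mod_m[of y 1 j] by simp
    finally have "w \<otimes> b = vtx y 0 (Suc j) \<otimes> b" using eq True w by (simp add: std_succ_def)
    hence "w = vtx y 0 (Suc j)" using w y by simp
    moreover have "vtx y 0 m = y" using vtx_mod_m[of y 0 m] y by simp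
    ultimately show False using True w j exits_b_vtx[of "Suc j"] by (cases "Suc j = m") auto
  next
    case False
    hence "w \<otimes> a = vtx y 0 j \<otimes> a" using eq w y by (simp add: std_succ_def vtx_mult_a)
    hence "w = vtx y 0 j" using w y by simp
    thus False using False w j exits_b_vtx[of j] vtx_eq_self_iff[OF y j] by auto
  qed
qed

section \<open>Every hamiltonian path is standard\<close>

context
  fixes y and B :: "'a \<Rightarrow> bool"
  assumes y: "y \<in> carrier G"
    and propagate: "\<And>u. u \<in> carrier G \<Longrightarrow> u \<noteq> y \<Longrightarrow> \<not> B u \<Longrightarrow> \<not> B (u \<otimes> c)"
begin

lemma not_B_along_level:
  assumes "\<And>q. q \<in> {p..<p + d} \<Longrightarrow> vtx y i q \<noteq> y" and "\<not> B (vtx y i p)"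
  shows "\<not> B (vtx y i (p + d))"
  using assms
proof (induction d)
  case (Suc d)
  hence "\<not> B (vtx y i (p + d) \<otimes> c)" using propagate y by simp
  thus ?case using vtx_mult_c[OF y] by simp
qed simp

lemma B_constant_on_level:
  assumes "i mod r \<noteq> 0"
  shows "B (vtx y i p) \<longleftrightarrow> B (vtx y i 0)"
proof -
  have ne: "vtx y i q \<noteq> y" for q using assms level_vtx[OF y, of i q] level_self[OF y] by metis
  have "\<not> B (vtx y i p)" if "\<not> B (vtx y i 0)" using not_B_along_level[OF ne that, of p] by simp
  moreover have "\<not> B (vtx y i 0)" if "\<not> B (vtx y i p)"
  proof -
    have "\<not> B (vtx y i (p mod m + (m - p mod m)))"
      using not_B_along_level[OF ne, of "p mod m" "m - p mod m"] that vtx_mod_m[of y i p] by simp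
    moreover have "p mod m + (m - p mod m) = m" using two_le_m by simp
    ultimately show ?thesis using vtx_mod_m[of y i m] by simp
  qed
  ultimately show ?thesis by blast
qed

lemma B_level_0_downward_closed:
  assumes "1 \<le> p" and "p \<le> p'" and "p' < m" and "B (vtx y 0 p')"
  shows "B (vtx y 0 p)"
proof (rule ccontr)
  assume "\<not> B (vtx y 0 p)"
  moreover have "vtx y 0 q \<noteq> y" if "q \<in> {p..<p + (p' - p)}" for q
    using that assms vtx_eq_self_iff[OF y, of q] by auto
  ultimately have "\<not> B (vtx y 0 (p + (p' - p)))" using not_B_along_level by blast
  thus False using assms by simp
qed

lemma exit_pattern_standard:
  obtains j L where "j < m" and "\<And>u. u \<in> carrier G \<Longrightarrow> u \<noteq> y \<Longrightarrow> B u \<longleftrightarrow> exits_b y j L u"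
proof -
  define S where "S = {p \<in> {1..<m}. B (vtx y 0 p)}"
  define j where "j = Max (insert 0 S)"
  define L where "L i = B (vtx y i 0)" for i
  have "finite S" unfolding S_def by simp
  have "j < m" unfolding j_def S_def using two_le_m by (subst Max_less_iff) auto
  have level_0: "B (vtx y 0 p) \<longleftrightarrow> p \<le> j" if "1 \<le> p" "p < m" for p
  proof
    assume "B (vtx y 0 p)"
    thus "p \<le> j" using that \<open>finite S\<close> unfolding j_def S_def by simp
  next
    assume "p \<le> j"
    hence "j \<in> S" unfolding j_def using that Max_in[of "insert 0 S"] \<open>finite S\<close> by auto
    hence "j < m" and "B (vtx y 0 j)" unfolding S_def by auto
    thus "B (vtx y 0 p)" using B_level_0_downward_closed[OF \<open>1 \<le> p\<close> \<open>p \<le> j\<close>] by blast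
  qed
  have "B u \<longleftrightarrow> exits_b y j L u" if u: "u \<in> carrier G" "u \<noteq> y" for u
  proof -
    have coords: "level y u < r" "position y u < m" "u = vtx y (level y u) (position y u)"
      using level_position[OF y u(1)] by auto
    show ?thesis
    proof (cases "level y u = 0")
      case True
      hence "B u \<longleftrightarrow> B (vtx y 0 (position y u))" using coords(3) by metis
      thus ?thesis using True level_0 position_neq_0[OF y u True] coords(2)
        unfolding exits_b_def by simp
    next
      case False
      thus ?thesis using B_constant_on_level[of "level y u" "position y u"] coords
        unfolding exits_b_def L_def by simp
    qed
  qed
  with \<open>j < m\<close> show ?thesis using that by blast
qed

end

context
  fixes P
  assumes ham: "is_ham_path G a b P"
begin

lemma distinct_ham_path: "distinct P" and set_ham_path: "set P = carrier G"
  and cay_arc_ham_path: "x \<in> path_arcs P \<Longrightarrow> cay_arc G a b x"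
  using ham unfolding is_ham_path_def by auto

lemma length_ham_path: "length P = r * m"
  using distinct_card[OF distinct_ham_path] set_ham_path card_carrier by simp

lemma last_ham_path_closed: "last P \<in> carrier G"
proof -
  have "P \<noteq> []" using length_ham_path two_le_card by auto
  thus ?thesis using set_ham_path last_in_set by blast
qed

lemma ham_path_arc_from:
  assumes u: "u \<in> carrier G" and "u \<noteq> last P"
  shows "(u, u \<otimes> (if (u, u \<otimes> b) \<in> path_arcs P then b else a)) \<in> path_arcs P"
proof -
  have "u \<in> set P" using u set_ham_path by simp
  then obtain v where v: "(u, v) \<in> path_arcs P" using path_arcs_from_exists assms(2) by metis
  hence "v = u \<otimes> a \<or> v = u \<otimes> b" using cay_arc_ham_path[OF v] unfolding cay_arc_def by auto
  thus ?thesis using v by auto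
qed

(* (u c) b = u a, so otherwise u a would have the two in-arcs from u and from u c. *)
lemma ham_path_exit_a_propagates:
  assumes u: "u \<in> carrier G" and "u \<noteq> last P" and "(u, u \<otimes> b) \<notin> path_arcs P"
  shows "(u \<otimes> c, u \<otimes> c \<otimes> b) \<notin> path_arcs P"
proof
  assume "(u \<otimes> c, u \<otimes> c \<otimes> b) \<in> path_arcs P"
  moreover have "u \<otimes> c \<otimes> b = u \<otimes> a" using u by (simp add: m_assoc c_mult_b)
  moreover have "(u, u \<otimes> a) \<in> path_arcs P" using ham_path_arc_from assms by fastforce
  ultimately have "u \<otimes> c = u" using path_arcs_in_unique[OF distinct_ham_path] by metis
  thus False using u c_neq_one by simp
qed

lemma ham_path_exit_pattern:
  obtains j L where "j < m"
    and "\<And>u. u \<in> carrier G \<Longrightarrow> u \<noteq> last P \<Longrightarrow> (u, u \<otimes> b) \<in> path_arcs P \<longleftrightarrow> exits_b (last P) j L u"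
  using exit_pattern_standard[OF last_ham_path_closed, of "\<lambda>u. (u, u \<otimes> b) \<in> path_arcs P"]
    ham_path_exit_a_propagates by blast

lemma ham_path_follows_std_succ:
  assumes j: "j < m"
    and follows: "\<And>u. u \<in> carrier G \<Longrightarrow> u \<noteq> last P \<Longrightarrow> (u, std_succ (last P) j L u) \<in> path_arcs P"
  shows "P = std_path (last P) j L"
proof -
  let ?y = "last P"
  have y: "?y \<in> carrier G" by (rule last_ham_path_closed)
  have "hd P = vtx ?y 1 j"
  proof (rule ccontr)
    assume "hd P \<noteq> vtx ?y 1 j"
    moreover have "vtx ?y 1 j \<in> set P" using set_ham_path y by simp
    ultimately obtain w where arc: "(w, vtx ?y 1 j) \<in> path_arcs P" using path_arcs_to_exists by metis
    hence "w \<in> carrier G" and "w \<noteq> ?y"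
      using cay_arc_ham_path[OF arc] path_arcs_from_last[OF distinct_ham_path] unfolding cay_arc_def by auto
    hence "std_succ ?y j L w = vtx ?y 1 j"
      using path_arcs_out_unique[OF distinct_ham_path _ arc] follows by blast
    thus False using std_succ_neq_start[OF y j \<open>w \<in> carrier G\<close> \<open>w \<noteq> ?y\<close>] by contradiction
  qed
  have "P ! t = (std_succ ?y j L ^^ Suc t) ?y" if "t < r * m" for t
    using that
  proof (induction t)
    case 0
    hence "P \<noteq> []" using length_ham_path by auto
    hence "P ! 0 = vtx ?y 1 j" using \<open>hd P = vtx ?y 1 j\<close> by (simp add: hd_conv_nth)
    thus ?case by (simp add: std_succ_def)
  next
    case (Suc t)
    have arc: "(P ! t, P ! Suc t) \<in> path_arcs P"
      using Suc.prems length_ham_path unfolding path_arcs_def by auto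
    hence "P ! t \<in> carrier G" and "P ! t \<noteq> ?y"
      using cay_arc_ham_path[OF arc] path_arcs_from_last[OF distinct_ham_path]
      unfolding cay_arc_def by auto
    hence "(P ! t, std_succ ?y j L (P ! t)) \<in> path_arcs P" by (rule follows)
    hence "P ! Suc t = std_succ ?y j L (P ! t)"
      by (rule path_arcs_out_unique[OF distinct_ham_path arc])
    thus ?case using Suc by simp
  qed
  thus ?thesis by (intro nth_equalityI) (simp_all add: length_ham_path nth_std_path)
qed

lemma ham_path_eq_std_path: "\<exists>j L. j < m \<and> P = std_path (last P) j L"
proof -
  obtain j L where j: "j < m" and pattern:
      "\<And>u. u \<in> carrier G \<Longrightarrow> u \<noteq> last P \<Longrightarrow> (u, u \<otimes> b) \<in> path_arcs P \<longleftrightarrow> exits_b (last P) j L u"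
    using ham_path_exit_pattern by blast
  have "(u, std_succ (last P) j L u) \<in> path_arcs P" if "u \<in> carrier G" "u \<noteq> last P" for u
    using ham_path_arc_from[OF that] pattern[OF that] that(2) unfolding std_succ_def by simp
  thus ?thesis using ham_path_follows_std_succ[OF j] j by blast
qed

end

section \<open>Arc-disjoint partners\<close>

lemma std_paths_arc_disjoint:
  assumes y: "y \<in> carrier G" and y': "y' \<in> carrier G" and "j\<^sub>1 < m" and "j\<^sub>2 < m"
    and "full_return_orbit j\<^sub>1 (num_b_levels L\<^sub>1 r)" and "full_return_orbit j\<^sub>2 (num_b_levels L\<^sub>2 r)"
    and opposite: "\<And>u. u \<in> carrier G \<Longrightarrow> u \<noteq> y \<Longrightarrow> u \<noteq> y' \<Longrightarrow> exits_b y j\<^sub>1 L\<^sub>1 u \<noteq> exits_b y' j\<^sub>2 L\<^sub>2 u"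
  shows "path_arcs (std_path y j\<^sub>1 L\<^sub>1) \<inter> path_arcs (std_path y' j\<^sub>2 L\<^sub>2) = {}"
proof -
  have "std_succ y j\<^sub>1 L\<^sub>1 u \<noteq> std_succ y' j\<^sub>2 L\<^sub>2 u" if "u \<in> carrier G" "u \<noteq> y" "u \<noteq> y'" for u
    using opposite[OF that] that a_neq_b unfolding std_succ_def by auto
  thus ?thesis using assms by (auto simp: path_arcs_std_path)
qed

lemma coords_rebase_c_pow:
  assumes y: "y \<in> carrier G" and "t < m" and u: "u \<in> carrier G"
  shows "level (vtx y 0 t) u = level y u" and "position (vtx y 0 t) u = (position y u + (m - t)) mod m"
proof -
  obtain l p where "l < r" "p < m" and u_eq: "u = vtx y l p"
    and "level y u = l" "position y u = p"
    using level_position[OF y u] by blast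
  have "u = vtx y l (p + m)" using u_eq vtx_mod_m[of y l "p + m"] \<open>p < m\<close> by simp
  also have "\<dots> = vtx (vtx y 0 t) l (p + (m - t))" using vtx_vtx[OF y] \<open>t < m\<close> by simp
  finally show "level (vtx y 0 t) u = level y u" and
    "position (vtx y 0 t) u = (position y u + (m - t)) mod m"
    using level_vtx[of "vtx y 0 t"] position_vtx[of "vtx y 0 t"] y \<open>l < r\<close>
      \<open>level y u = l\<close> \<open>position y u = p\<close> by simp_all
qed

lemma level_rebase_a_pow:
  assumes y: "y \<in> carrier G" and "i\<^sub>0 < r" and u: "u \<in> carrier G"
  shows "level (vtx y i\<^sub>0 0) u = (level y u + (r - i\<^sub>0)) mod r"
proof -
  obtain l p where "l < r" "p < m" and u_eq: "u = vtx y l p" and "level y u = l"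
    using level_position[OF y u] by blast
  have "vtx (vtx y i\<^sub>0 0) (l + (r - i\<^sub>0)) (p + (m - twist)) = vtx y (l + r) (p + (m - twist))"
    using vtx_vtx[OF y] \<open>i\<^sub>0 < r\<close> by simp
  also have "\<dots> = vtx y l ((p + (m - twist) + twist) mod m)"
    using vtx_normalize[OF y, of "l + r"] \<open>l < r\<close> r_pos by simp
  also have "(p + (m - twist) + twist) mod m = p"
    using twist_less_m \<open>p < m\<close> by simp
  finally have "u = vtx (vtx y i\<^sub>0 0) (l + (r - i\<^sub>0)) (p + (m - twist))"
    using u_eq by simp
  thus ?thesis using level_vtx[of "vtx y i\<^sub>0 0"] y \<open>level y u = l\<close> by simp
qed

lemma arc_disjoint_partner_shift_c:
  assumes y: "y \<in> carrier G" and j\<^sub>1: "j\<^sub>1 < m" and j\<^sub>2: "j\<^sub>2 < m" and t: "t < m"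
    and orbit\<^sub>1: "full_return_orbit j\<^sub>1 (num_b_levels L r)" and orbit\<^sub>2: "full_return_orbit j\<^sub>2 k"
    and k: "num_b_levels L r + k + 1 = r"
    and opposite: "\<And>p. 1 \<le> p \<Longrightarrow> p < m \<Longrightarrow> p \<noteq> t \<Longrightarrow> (p \<le> j\<^sub>1) \<noteq> ((p + (m - t)) mod m \<le> j\<^sub>2)"
  shows "\<exists>Q. is_ham_path G a b Q \<and> path_arcs (std_path y j\<^sub>1 L) \<inter> path_arcs Q = {}"
proof -
  define y' where "y' = vtx y 0 t"
  define L' where "L' i = (\<not> L i)" for i
  have y': "y' \<in> carrier G" unfolding y'_def using y by simp
  have "num_b_levels L' r = k" using num_b_levels_not[of L r] k unfolding L'_def by simp
  hence orbit': "full_return_orbit j\<^sub>2 (num_b_levels L' r)" using orbit\<^sub>2 by simp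
  have "path_arcs (std_path y j\<^sub>1 L) \<inter> path_arcs (std_path y' j\<^sub>2 L') = {}"
  proof (rule std_paths_arc_disjoint[OF y y' j\<^sub>1 j\<^sub>2 orbit\<^sub>1 orbit'])
    fix u assume u: "u \<in> carrier G" "u \<noteq> y" "u \<noteq> y'"
    note shifted = coords_rebase_c_pow[OF y t u(1), folded y'_def]
    show "exits_b y j\<^sub>1 L u \<noteq> exits_b y' j\<^sub>2 L' u"
    proof (cases "level y u = 0")
      case True
      have "position y u \<noteq> t"
        using u(1,3) True level_position[OF y u(1)] unfolding y'_def by metis
      thus ?thesis
        using opposite[of "position y u"] position_neq_0[OF y u(1,2) True] level_position[OF y u(1)]
          shifted True
        unfolding exits_b_def by simp
    qed (use shifted in \<open>simp add: exits_b_def L'_def\<close>)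
  qed
  thus ?thesis using is_ham_path_std_path[OF y' j\<^sub>2 orbit'] by blast
qed

lemma arc_disjoint_partner_shift_a:
  assumes y: "y \<in> carrier G" and j\<^sub>1: "j\<^sub>1 < m" and j\<^sub>2: "j\<^sub>2 < m" and i\<^sub>0: "1 \<le> i\<^sub>0" "i\<^sub>0 < r"
    and orbit\<^sub>1: "full_return_orbit j\<^sub>1 (num_b_levels L r)" and orbit\<^sub>2: "full_return_orbit j\<^sub>2 k"
    and k: "k + num_b_levels L r = (if L i\<^sub>0 then r else r - 2)"
    and opposite\<^sub>1: "\<And>p. 1 \<le> p \<Longrightarrow> p < m \<Longrightarrow> (p \<le> j\<^sub>1) \<noteq> L i\<^sub>0"
    and opposite\<^sub>2: "\<And>p. 1 \<le> p \<Longrightarrow> p < m \<Longrightarrow> (p \<le> j\<^sub>2) \<noteq> L i\<^sub>0"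
  shows "\<exists>Q. is_ham_path G a b Q \<and> path_arcs (std_path y j\<^sub>1 L) \<inter> path_arcs Q = {}"
proof -
  define y' where "y' = vtx y i\<^sub>0 0"
  define M where "M l = (if l = 0 then L i\<^sub>0 else \<not> L l)" for l
  define L' where "L' i = M ((i + i\<^sub>0) mod r)" for i
  have y': "y' \<in> carrier G" unfolding y'_def using y by simp
  have "num_b_levels L' r = k"
    using num_b_levels_opposite_rotated[OF i\<^sub>0, of L] k unfolding L'_def M_def by simp
  hence orbit': "full_return_orbit j\<^sub>2 (num_b_levels L' r)" using orbit\<^sub>2 by simp
  have "path_arcs (std_path y j\<^sub>1 L) \<inter> path_arcs (std_path y' j\<^sub>2 L') = {}"
  proof (rule std_paths_arc_disjoint[OF y y' j\<^sub>1 j\<^sub>2 orbit\<^sub>1 orbit'])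
    fix u assume u: "u \<in> carrier G" "u \<noteq> y" "u \<noteq> y'"
    let ?l = "level y u"
    have l: "?l < r" and p: "position y u < m" using level_position[OF y u(1)] by auto
    have l': "level y' u = (?l + (r - i\<^sub>0)) mod r"
      using level_rebase_a_pow[OF y i\<^sub>0(2) u(1)] unfolding y'_def .
    have level_back: "(level y' u + i\<^sub>0) mod r = ?l"
      using l i\<^sub>0 unfolding l' by (simp add: mod_add_left_eq)
    have l'_eq_0: "level y' u = 0 \<longleftrightarrow> ?l = i\<^sub>0"
      using l' mod_add_diff_self[OF l i\<^sub>0(2)] l i\<^sub>0 by auto
    show "exits_b y j\<^sub>1 L u \<noteq> exits_b y' j\<^sub>2 L' u"
    proof (cases "?l = 0")
      case True
      thus ?thesis
        using opposite\<^sub>1[of "position y u"] position_neq_0[OF y u(1,2) True] p l'_eq_0 level_back i\<^sub>0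
        unfolding exits_b_def L'_def M_def by simp
    next
      case False
      show ?thesis
      proof (cases "?l = i\<^sub>0")
        case True
        thus ?thesis
          using opposite\<^sub>2[of "position y' u"] position_neq_0[OF y' u(1,3)] l'_eq_0
            level_position[OF y' u(1)] False
          unfolding exits_b_def by simp
      qed (use False l'_eq_0 level_back in \<open>simp add: exits_b_def L'_def M_def\<close>)
    qed
  qed
  thus ?thesis using is_ham_path_std_path[OF y' j\<^sub>2 orbit'] by blast
qed

lemma ham_path_std_params:
  assumes "is_ham_path G a b P"
  obtains j L where "j < m" and "P = std_path (last P) j L"
    and "full_return_orbit j (num_b_levels L r)" and "delta G b P = j + m * num_b_levels L r"
proof -
  obtain j L where j: "j < m" and P: "P = std_path (last P) j L"
    using ham_path_eq_std_path[OF assms] by blast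
  moreover have orbit: "full_return_orbit j (num_b_levels L r)"
    using full_return_orbit_if_distinct last_ham_path_closed[OF assms] distinct_ham_path[OF assms] P
    by metis
  moreover have "delta G b P = j + m * num_b_levels L r"
    using delta_b_std_path[OF last_ham_path_closed[OF assms] j orbit] P by metis
  ultimately show ?thesis using that by blast
qed

lemma arc_disjoint_partner_exists:
  assumes ham: "is_ham_path G a b P" and ham': "is_ham_path G a b P'"
    and sum: "delta G b P + delta G b P' \<in> {card (carrier G), card (carrier G) - 1, card (carrier G) - 2}"
  shows "\<exists>Q. is_ham_path G a b Q \<and> path_arcs P \<inter> path_arcs Q = {}"
proof -
  obtain j\<^sub>1 L\<^sub>1 where j\<^sub>1: "j\<^sub>1 < m" and P: "P = std_path (last P) j\<^sub>1 L\<^sub>1"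
    and orbit\<^sub>1: "full_return_orbit j\<^sub>1 (num_b_levels L\<^sub>1 r)"
    and delta\<^sub>1: "delta G b P = j\<^sub>1 + m * num_b_levels L\<^sub>1 r"
    using ham_path_std_params[OF ham] .
  obtain j\<^sub>2 L\<^sub>2 where j\<^sub>2: "j\<^sub>2 < m" and orbit\<^sub>2: "full_return_orbit j\<^sub>2 (num_b_levels L\<^sub>2 r)"
    and delta\<^sub>2: "delta G b P' = j\<^sub>2 + m * num_b_levels L\<^sub>2 r"
    using ham_path_std_params[OF ham'] .
  define y k\<^sub>1 k\<^sub>2 where "y = last P" and "k\<^sub>1 = num_b_levels L\<^sub>1 r" and "k\<^sub>2 = num_b_levels L\<^sub>2 r"
  have y: "y \<in> carrier G" unfolding y_def by (rule last_ham_path_closed[OF ham])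
  have counts: "j\<^sub>1 + m * k\<^sub>1 + (j\<^sub>2 + m * k\<^sub>2) \<in> {r * m, r * m - 1, r * m - 2}"
    using sum card_carrier delta\<^sub>1 delta\<^sub>2 unfolding k\<^sub>1_def k\<^sub>2_def by simp
  have "k\<^sub>1 \<le> r - 1" and "k\<^sub>2 \<le> r - 1" unfolding k\<^sub>1_def k\<^sub>2_def by (rule num_b_levels_le)+
  hence "\<exists>Q. is_ham_path G a b Q \<and> path_arcs (std_path y j\<^sub>1 L\<^sub>1) \<inter> path_arcs Q = {}"
  proof (rule level_count_cases[OF j\<^sub>1 j\<^sub>2 _ _ two_le_m counts])
    assume "k\<^sub>1 + k\<^sub>2 + 1 = r" and "j\<^sub>1 + j\<^sub>2 + 1 = m \<or> j\<^sub>1 + j\<^sub>2 = m \<or> j\<^sub>1 + j\<^sub>2 + 2 = m"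
    then obtain t where "t < m"
      and "\<And>p. 1 \<le> p \<Longrightarrow> p < m \<Longrightarrow> p \<noteq> t \<Longrightarrow> (p \<le> j\<^sub>1) \<noteq> ((p + (m - t)) mod m \<le> j\<^sub>2)"
      using complementary_shift_exists[OF j\<^sub>1] by blast
    thus ?thesis
      using arc_disjoint_partner_shift_c[OF y j\<^sub>1 j\<^sub>2 _ orbit\<^sub>1 orbit\<^sub>2] \<open>k\<^sub>1 + k\<^sub>2 + 1 = r\<close>
      unfolding k\<^sub>1_def k\<^sub>2_def by (simp add: add.commute)
  next
    assume "k\<^sub>1 + k\<^sub>2 = r" and "j\<^sub>1 = 0" and "j\<^sub>2 = 0"
    hence "k\<^sub>1 \<noteq> 0" using num_b_levels_le[of L\<^sub>2 r] r_pos unfolding k\<^sub>2_def by linarith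
    then obtain i\<^sub>0 where i\<^sub>0: "1 \<le> i\<^sub>0" "i\<^sub>0 < r" and "L\<^sub>1 i\<^sub>0"
      unfolding k\<^sub>1_def num_b_levels_def by (auto simp: card_eq_0_iff)
    thus ?thesis
      using arc_disjoint_partner_shift_a[OF y j\<^sub>1 j\<^sub>2 i\<^sub>0 orbit\<^sub>1 orbit\<^sub>2] \<open>k\<^sub>1 + k\<^sub>2 = r\<close>
        \<open>j\<^sub>1 = 0\<close> \<open>j\<^sub>2 = 0\<close>
      unfolding k\<^sub>1_def k\<^sub>2_def by (simp add: add.commute)
  next
    assume "k\<^sub>1 + k\<^sub>2 + 2 = r" and "j\<^sub>1 + 1 = m" and "j\<^sub>2 + 1 = m"
    hence "num_b_levels (\<lambda>i. \<not> L\<^sub>1 i) r \<noteq> 0"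
      using num_b_levels_not[of L\<^sub>1 r] unfolding k\<^sub>1_def by linarith
    then obtain i\<^sub>0 where i\<^sub>0: "1 \<le> i\<^sub>0" "i\<^sub>0 < r" and "\<not> L\<^sub>1 i\<^sub>0"
      unfolding num_b_levels_def by (auto simp: card_eq_0_iff)
    thus ?thesis
      using arc_disjoint_partner_shift_a[OF y j\<^sub>1 j\<^sub>2 i\<^sub>0 orbit\<^sub>1 orbit\<^sub>2] \<open>k\<^sub>1 + k\<^sub>2 + 2 = r\<close>
        \<open>j\<^sub>1 + 1 = m\<close> \<open>j\<^sub>2 + 1 = m\<close>
      unfolding k\<^sub>1_def k\<^sub>2_def by (simp add: add.commute)
  qed
  thus ?thesis using P unfolding y_def by simp
qed

end

theorem mainTheorem8:
  fixes G :: "('g, 'm) monoid_scheme" and a b :: 'g and P P' :: "'g list"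
  assumes "comm_group G" and "finite (carrier G)"
    and "a \<in> carrier G" and "b \<in> carrier G" and "a \<noteq> b"
    and "generate G {a, b} = carrier G"
    and "is_ham_path G a b P" and "is_ham_path G a b P'"
    and "\<bar>int (delta G b P) - int (delta G a P')\<bar> \<le> 1
         \<or> delta G b P + delta G b P' \<in> {card (carrier G), card (carrier G) - 1, card (carrier G) - 2}"
  shows "\<exists>Q Q'. is_ham_path G a b Q \<and> is_ham_path G a b Q' \<and> path_arcs Q \<inter> path_arcs Q' = {}"
proof -
  interpret two_generated_abelian G a b
    using assms(1-6) by (simp add: two_generated_abelian_def two_generated_abelian_axioms_def)
  have "delta G a P' + delta G b P' = card (carrier G) - 1"
    using delta_add_delta assms(3-5,8) by blast
  hence "delta G b P + delta G b P' \<in> {card (carrier G), card (carrier G) - 1, card (carrier G) - 2}"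
    using assms(9) card_carrier two_le_card by auto
  thus ?thesis using arc_disjoint_partner_exists assms(7,8) by blast
qed

end
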